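(* Every Alster space is Hurewicz.
   Context: A topological space $X$ is Alster if every cover of $X$ by $G_\delta$ subsets of $X$ such that each compact subset of $X$ is included in some member of the cover has a countable subcover. A point-cofinite cover of a space is an infinite open cover such that each point of the space belongs to all but finitely many members of the cover. A space $X$ is Hurewicz if for each sequence $\{\mathcal{U}_n\}_{n<\omega}$ of open covers of $X$, none of which has a finite subcover, there are finite $\mathcal{F}_n\subseteq\mathcal{U}_n$ such that $\{\bigcup\mathcal{F}_n : n<\omega\}$ is a point-cofinite cover of $X$. No separation axioms are assumed. *)

theory Defs
  imports "HOL-Analysis.Analysis"
begin

definition alster_space :: "'a topology \<Rightarrow> bool" where
  "alster_space X \<longleftrightarrow>
     (\<forall>\<G>. (\<forall>G\<in>\<G>. gdelta_in X G) \<and> \<Union>\<G> = topspace X \<and>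
          (\<forall>K. K \<subseteq> topspace X \<and> compactin X K \<longrightarrow> (\<exists>G\<in>\<G>. K \<subseteq> G))
       \<longrightarrow> (\<exists>\<H>. \<H> \<subseteq> \<G> \<and> countable \<H> \<and> \<Union>\<H> = topspace X))"

definition open_cover :: "'a topology \<Rightarrow> 'a set set \<Rightarrow> bool" where
  "open_cover X \<U> \<longleftrightarrow> (\<forall>U\<in>\<U>. openin X U) \<and> \<Union>\<U> = topspace X"

definition has_finite_subcover :: "'a topology \<Rightarrow> 'a set set \<Rightarrow> bool" where
  "has_finite_subcover X \<U> \<longleftrightarrow> (\<exists>\<V>. \<V> \<subseteq> \<U> \<and> finite \<V> \<and> \<Union>\<V> = topspace X)"

definition point_cofinite_cover :: "'a topology \<Rightarrow> 'a set set \<Rightarrow> bool" where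
  "point_cofinite_cover X \<U> \<longleftrightarrow> infinite \<U> \<and> open_cover X \<U> \<and>
     (\<forall>x\<in>topspace X. finite {U\<in>\<U>. x \<notin> U})"

definition hurewicz_space :: "'a topology \<Rightarrow> bool" where
  "hurewicz_space X \<longleftrightarrow>
     (\<forall>\<U> :: nat \<Rightarrow> 'a set set.
        (\<forall>n. open_cover X (\<U> n) \<and> \<not> has_finite_subcover X (\<U> n))
        \<longrightarrow> (\<exists>\<F> :: nat \<Rightarrow> 'a set set. (\<forall>n. finite (\<F> n) \<and> \<F> n \<subseteq> \<U> n) \<and>
               point_cofinite_cover X (range (\<lambda>n. \<Union>(\<F> n)))))"

end

theory Submission
  imports Defs
begin

text \<open>Given open covers \<open>\<U> n\<close>, every compact set lies in a set \<open>\<Inter>n. \<Union>(F n)\<close> with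
  \<open>F n\<close> a finite subfamily of \<open>\<U> n\<close>. These sets are \<open>G\<^sub>\<delta>\<close>, so the Alster property
  yields countably many of them, \<open>\<Inter>n. \<Union>(F k n)\<close> for \<open>k \<in> \<nat>\<close>, covering the space.
  The diagonal choice \<open>\<Union>k\<le>n. F k n\<close> puts every point into the \<open>n\<close>-th union for all
  \<open>n\<close> beyond its index \<open>k\<close>; since no \<open>\<U> n\<close> has a finite subcover, these unions are
  proper subsets and hence form an infinite, point-cofinite cover.\<close>

lemma compactin_finite_subfamilies:
  assumes "compactin X K" and "\<And>n. open_cover X (\<U> n)"
  obtains F where "\<And>n. finite (F n)" "\<And>n. F n \<subseteq> \<U> n" "\<And>n. K \<subseteq> \<Union>(F n)"
proof -
  have "\<forall>n. \<exists>F. finite F \<and> F \<subseteq> \<U> n \<and> K \<subseteq> \<Union>F"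
  proof
    fix n
    have "K \<subseteq> \<Union>(\<U> n)"
      using compactin_subset_topspace[OF assms(1)] assms(2)[of n] by (simp add: open_cover_def)
    then show "\<exists>F. finite F \<and> F \<subseteq> \<U> n \<and> K \<subseteq> \<Union>F"
      using assms unfolding compactin_def open_cover_def by blast
  qed
  then obtain F where "\<forall>n. finite (F n) \<and> F n \<subseteq> \<U> n \<and> K \<subseteq> \<Union>(F n)"
    by (auto dest: choice)
  then show thesis
    by (intro that[of F]) auto
qed

lemma open_cover_openin_Union:
  assumes "open_cover X \<U>" and "\<F> \<subseteq> \<U>"
  shows "openin X (\<Union>\<F>)"
proof (rule openin_Union)
  show "openin X U" if "U \<in> \<F>" for U
    using that assms unfolding open_cover_def by blast
qed

definition finite_selection_Inters :: "(nat \<Rightarrow> 'a set set) \<Rightarrow> 'a set set" where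
  "finite_selection_Inters \<U> = {\<Inter>n. \<Union>(F n) | F. \<forall>n. finite (F n) \<and> F n \<subseteq> \<U> n}"

lemma compactin_subset_finite_selection_Inter:
  assumes "compactin X K" and "\<And>n. open_cover X (\<U> n)"
  shows "\<exists>G\<in>finite_selection_Inters \<U>. K \<subseteq> G"
proof -
  obtain F where F: "\<And>n. finite (F n)" "\<And>n. F n \<subseteq> \<U> n" "\<And>n. K \<subseteq> \<Union>(F n)"
    using assms by (rule compactin_finite_subfamilies) (rule that)
  have "(\<Inter>n. \<Union>(F n)) \<in> finite_selection_Inters \<U>"
    unfolding finite_selection_Inters_def using F(1,2) by blast
  moreover have "K \<subseteq> (\<Inter>n. \<Union>(F n))"
    using F(3) by (rule INF_greatest)
  ultimately show ?thesis
    by blast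
qed

lemma gdelta_in_finite_selection_Inters:
  assumes "\<And>n. open_cover X (\<U> n)" and "G \<in> finite_selection_Inters \<U>"
  shows "gdelta_in X G"
proof -
  obtain F where G: "G = (\<Inter>n. \<Union>(F n))" and F: "\<And>n. F n \<subseteq> \<U> n"
    using assms(2) unfolding finite_selection_Inters_def by blast
  have "openin X (\<Union>(F n))" for n
    using assms(1) F by (rule open_cover_openin_Union)
  then show ?thesis
    unfolding G by (intro gdelta_in_Inter open_imp_gdelta_in) auto
qed

lemma Union_finite_selection_Inters:
  assumes "\<And>n. open_cover X (\<U> n)"
  shows "\<Union>(finite_selection_Inters \<U>) = topspace X"
proof
  show "\<Union>(finite_selection_Inters \<U>) \<subseteq> topspace X"
  proof
    fix x assume "x \<in> \<Union>(finite_selection_Inters \<U>)"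
    then obtain F where "\<forall>n. finite (F n) \<and> F n \<subseteq> \<U> n" "x \<in> (\<Inter>n. \<Union>(F n))"
      unfolding finite_selection_Inters_def by blast
    then have "F 0 \<subseteq> \<U> 0" "x \<in> \<Union>(F 0)"
      by auto
    then show "x \<in> topspace X"
      using assms[of 0] unfolding open_cover_def by blast
  qed
  show "topspace X \<subseteq> \<Union>(finite_selection_Inters \<U>)"
  proof
    fix x assume "x \<in> topspace X"
    then have "compactin X {x}"
      by simp
    then have "\<exists>G\<in>finite_selection_Inters \<U>. {x} \<subseteq> G"
      using assms by (rule compactin_subset_finite_selection_Inter)
    then show "x \<in> \<Union>(finite_selection_Inters \<U>)"
      by blast
  qed
qed

lemma countable_subset_finite_selection_Inters_index:
  assumes "\<H> \<subseteq> finite_selection_Inters \<U>" and "countable \<H>"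
  obtains F :: "nat \<Rightarrow> nat \<Rightarrow> 'a set set"
  where "\<And>k n. finite (F k n)" "\<And>k n. F k n \<subseteq> \<U> n"
    and "\<Union>\<H> \<subseteq> (\<Union>k. \<Inter>n. \<Union>(F k n))"
proof -
  \<comment> \<open>Adding \<open>{}\<close>, the intersection for the empty selection, makes the family nonempty,
    so that \<open>from_nat_into\<close> enumerates it.\<close>
  have "{} \<in> finite_selection_Inters \<U>"
    unfolding finite_selection_Inters_def by (intro CollectI exI[of _ "\<lambda>n. {}"]) simp
  define h where "h = from_nat_into (insert {} \<H>)"
  have range_h: "range h = insert {} \<H>"
    using assms(2) by (simp add: h_def range_from_nat_into)
  have "\<forall>k. \<exists>F. (\<forall>n. finite (F n) \<and> F n \<subseteq> \<U> n) \<and> h k = (\<Inter>n. \<Union>(F n))"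
  proof
    fix k
    have "h k \<in> finite_selection_Inters \<U>"
      using rangeI[of h k] range_h assms(1) \<open>{} \<in> finite_selection_Inters \<U>\<close> by auto
    then show "\<exists>F. (\<forall>n. finite (F n) \<and> F n \<subseteq> \<U> n) \<and> h k = (\<Inter>n. \<Union>(F n))"
      unfolding finite_selection_Inters_def by blast
  qed
  then obtain F where F: "\<forall>k. (\<forall>n. finite (F k n) \<and> F k n \<subseteq> \<U> n) \<and> h k = (\<Inter>n. \<Union>(F k n))"
    by (metis choice)
  show thesis
  proof
    show "finite (F k n)" "F k n \<subseteq> \<U> n" for k n
      using F by simp_all
    have "\<Union>\<H> \<subseteq> \<Union>(range h)"
      using range_h by auto
    then show "\<Union>\<H> \<subseteq> (\<Union>k. \<Inter>n. \<Union>(F k n))"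
      by (simp add: F)
  qed
qed

lemma alster_space_countable_selections:
  assumes "alster_space X" and covers: "\<And>n. open_cover X (\<U> n)"
  obtains F :: "nat \<Rightarrow> nat \<Rightarrow> 'a set set"
  where "\<And>k n. finite (F k n)" "\<And>k n. F k n \<subseteq> \<U> n"
    and "topspace X \<subseteq> (\<Union>k. \<Inter>n. \<Union>(F k n))"
proof -
  let ?\<G> = "finite_selection_Inters \<U>"
  have gdelta: "gdelta_in X G" if "G \<in> ?\<G>" for G
    using covers that by (rule gdelta_in_finite_selection_Inters)
  have compact: "\<exists>G\<in>?\<G>. K \<subseteq> G" if "compactin X K" for K
    using that covers by (rule compactin_subset_finite_selection_Inter)
  have "\<Union>?\<G> = topspace X"
    using covers by (rule Union_finite_selection_Inters)
  then have alster_hyps: "(\<forall>G\<in>?\<G>. gdelta_in X G) \<and> \<Union>?\<G> = topspace X \<and>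
      (\<forall>K. K \<subseteq> topspace X \<and> compactin X K \<longrightarrow> (\<exists>G\<in>?\<G>. K \<subseteq> G))"
    by (simp add: gdelta compact)
  obtain \<H> where \<H>: "\<H> \<subseteq> ?\<G>" "countable \<H>" "\<Union>\<H> = topspace X"
    using assms(1)[unfolded alster_space_def, rule_format, OF alster_hyps] by blast
  obtain F :: "nat \<Rightarrow> nat \<Rightarrow> 'a set set"
    where fin: "\<And>k n. finite (F k n)" and sub: "\<And>k n. F k n \<subseteq> \<U> n"
      and cover: "\<Union>\<H> \<subseteq> (\<Union>k. \<Inter>n. \<Union>(F k n))"
    using \<H>(1,2) by (rule countable_subset_finite_selection_Inters_index) (rule that)
  show thesis
  proof (rule that)
    show "finite (F k n)" for k n
      by (fact fin)
    show "F k n \<subseteq> \<U> n" for k n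
      by (fact sub)
    show "topspace X \<subseteq> (\<Union>k. \<Inter>n. \<Union>(F k n))"
      using cover \<H>(3) by simp
  qed
qed

lemma point_cofinite_cover_of_eventually:
  assumes "\<And>n. openin X (W n)" and "\<And>n. W n \<noteq> topspace X"
    and "\<And>x. x \<in> topspace X \<Longrightarrow> eventually (\<lambda>n. x \<in> W n) sequentially"
  shows "point_cofinite_cover X (range W)"
  unfolding point_cofinite_cover_def open_cover_def
proof (intro conjI ballI)
  have W_sub: "W n \<subseteq> topspace X" for n
    using assms(1) openin_subset by blast
  have cofinite: "finite {n. x \<notin> W n}" if "x \<in> topspace X" for x
    using assms(3)[OF that] by (simp add: cofinite_eq_sequentially[symmetric] eventually_cofinite)
  then show "finite {U \<in> range W. x \<notin> U}" if "x \<in> topspace X" for x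
    using that by (auto intro: finite_subset[of _ "W ` {n. x \<notin> W n}"])
  show "infinite (range W)"
  proof
    assume "finite (range W)"
    then obtain m where m: "infinite (W -` {W m})"
      using inf_img_fin_domE'[of W UNIV] by auto
    have "topspace X \<subseteq> W m"
    proof
      fix x assume "x \<in> topspace X"
      then have "infinite (W -` {W m} - {n. x \<notin> W n})"
        using m cofinite by simp
      then obtain n where "W n = W m" "x \<in> W n"
        by (auto dest!: infinite_imp_nonempty)
      then show "x \<in> W m" by simp
    qed
    then show False
      using W_sub assms(2) by blast
  qed
  show "openin X U" if "U \<in> range W" for U
    using that assms(1) by auto
  show "\<Union>(range W) = topspace X"
  proof
    show "topspace X \<subseteq> \<Union>(range W)"
    proof
      fix x assume "x \<in> topspace X"
      then obtain N where "\<And>n. n \<ge> N \<Longrightarrow> x \<in> W n"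
        using assms(3) by (meson eventually_sequentially)
      then show "x \<in> \<Union>(range W)" by blast
    qed
  qed (use W_sub in blast)
qed

lemma eventually_mem_Union_diagonal:
  assumes "x \<in> (\<Union>k. \<Inter>n. \<Union>(F k n))"
  shows "eventually (\<lambda>n. x \<in> \<Union>(\<Union>k\<le>n. F k n)) sequentially"
proof -
  obtain k where k: "\<And>n. x \<in> \<Union>(F k n)"
    using assms by blast
  have "x \<in> \<Union>(\<Union>k\<le>n. F k n)" if "k \<le> n" for n
    using k[of n] that by blast
  then show ?thesis
    unfolding eventually_sequentially by blast
qed

theorem theorem2p3:
  fixes X :: "'a topology"
  assumes "alster_space X"
  shows "hurewicz_space X"
  unfolding hurewicz_space_def
proof (intro allI impI)
  fix \<U> :: "nat \<Rightarrow> 'a set set"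
  assume \<U>: "\<forall>n. open_cover X (\<U> n) \<and> \<not> has_finite_subcover X (\<U> n)"
  then have covers: "\<And>n. open_cover X (\<U> n)"
    by blast
  obtain F :: "nat \<Rightarrow> nat \<Rightarrow> 'a set set"
    where fin: "\<And>k n. finite (F k n)" and sub: "\<And>k n. F k n \<subseteq> \<U> n"
      and cover: "topspace X \<subseteq> (\<Union>k. \<Inter>n. \<Union>(F k n))"
    using covers by (rule alster_space_countable_selections[OF assms]) (rule that)
  define \<F> where "\<F> n = (\<Union>k\<le>n. F k n)" for n
  have \<F>: "finite (\<F> n)" "\<F> n \<subseteq> \<U> n" for n
    unfolding \<F>_def using fin sub by (simp, blast)
  have "point_cofinite_cover X (range (\<lambda>n. \<Union>(\<F> n)))"
  proof (rule point_cofinite_cover_of_eventually)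
    show "openin X (\<Union>(\<F> n))" for n
      using covers \<F>(2) by (rule open_cover_openin_Union)
    have "\<not> has_finite_subcover X (\<U> n)" for n
      using \<U> by blast
    then show "\<Union>(\<F> n) \<noteq> topspace X" for n
      using \<F>[of n] unfolding has_finite_subcover_def by blast
    show "eventually (\<lambda>n. x \<in> \<Union>(\<F> n)) sequentially" if "x \<in> topspace X" for x
      using subsetD[OF cover that] unfolding \<F>_def by (rule eventually_mem_Union_diagonal)
  qed
  with \<F> show "\<exists>\<F>. (\<forall>n. finite (\<F> n) \<and> \<F> n \<subseteq> \<U> n) \<and> point_cofinite_cover X (range (\<lambda>n. \<Union>(\<F> n)))"
    by blast
qed

end
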